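(* (i) Let $A$ be a $3\times m$ matrix with entries in $\{0,1,-1\}$ and let $B\in\mathcal{Q}_0(A^t)$. Then $(AB)^{[2]}$ is a $P_0$-matrix, and no nonreal eigenvalue of $AB$ lies in the open left half-plane $\mathbb{C}_-$. (ii) Let $A$ be an $m\times 3$ matrix with entries in $\{0,1,-1\}$ and let $B\in\mathcal{Q}_0(A^t)$. Then no nonreal eigenvalue of $AB$ lies in $\mathbb{C}_-$.
   Context: For $M\in\mathbb{R}^{n\times m}$, $\mathcal{Q}(M)$ is the set of real matrices with the same entrywise sign pattern as $M$, and $\mathcal{Q}_0(M)$ its closure. A square real matrix is a $P_0$-matrix if all principal minors are nonnegative. $M^{[2]}$ denotes the second additive compound of a square matrix $M\in\mathbb{R}^{n\times n}$: the matrix of $u\wedge v\mapsto Mu\wedge v+u\wedge Mv$ on $\Lambda^2\mathbb{R}^n$ in the lexicographically ordered basis $e_i\wedge e_j$, $i<j$. *)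

theory Defs
  imports "HOL-Analysis.Analysis"
begin

definition sign_class :: "real^'n^'m \<Rightarrow> (real^'n^'m) set" where
  "sign_class M = {B. \<forall>i j. sgn (B$i$j) = sgn (M$i$j)}"

definition sign_class0 :: "real^'n^'m \<Rightarrow> (real^'n^'m) set" where
  "sign_class0 M = closure (sign_class M)"

definition principal_minor :: "real^'n^'n \<Rightarrow> 'n set \<Rightarrow> real" where
  "principal_minor M S =
     (\<Sum>p\<in>{p. p permutes S}. of_int (sign p) * (\<Prod>i\<in>S. M$i$(p i)))"

definition P0_matrix :: "real^'n^'n \<Rightarrow> bool" where
  "P0_matrix M \<longleftrightarrow> (\<forall>S. principal_minor M S \<ge> 0)"

text \<open>Lexicographically ordered basis of the second exterior power of R^3:
  e1^e2, e1^e3, e2^e3.\<close>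
definition wedge_idx :: "3 \<Rightarrow> 3 \<times> 3" where
  "wedge_idx a = (if a = 1 then (1,2) else if a = 2 then (1,3) else (2,3))"

text \<open>Second additive compound of a 3x3 matrix: entry (a,b) is the coefficient of
  basis element a in M e_k ^ e_l + e_k ^ M e_l, where b = e_k ^ e_l.\<close>
definition add_compound2 :: "real^3^3 \<Rightarrow> real^3^3" where
  "add_compound2 M = (\<chi> a b. (case wedge_idx a of (i,j) \<Rightarrow> case wedge_idx b of (k,l) \<Rightarrow>
      (if l = j then M$i$k else 0) - (if l = i then M$j$k else 0)
    + (if k = i then M$j$l else 0) - (if k = j then M$i$l else 0)))"

definition eigenvalue :: "real^'n^'n \<Rightarrow> complex \<Rightarrow> bool" where
  "eigenvalue M z \<longleftrightarrow>
     (\<exists>v::complex^'n. v \<noteq> 0 \<and> (\<chi> i j. complex_of_real (M$i$j)) *v v = z *s v)"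

end

theory Submission
  imports Defs
begin

text \<open>
  If B has the sign pattern of A^T and A has entries in {0, 1, -1}, every term of
  (AB)_ik = \<Sum>_j A_ij B_jk is bounded in absolute value by the corresponding term of
  (AB)_kk = \<Sum>_j A_kj B_jk \<ge> 0, so AB is weakly column diagonally dominant. For a 3 \<times> 3
  column dominant M the principal minors of M^[2] are nonnegative by elementary estimates.
  The eigenvalues of M^[2] are the sums \<lambda>_i + \<lambda>_j of eigenvalues of M, so a nonreal
  eigenvalue a + ib of M makes 2a an eigenvalue of M^[2]; but det (P + tI) > 0 for a
  P_0-matrix P and t > 0, hence a \<ge> 0. Part (ii) reduces to (i) because AB and BA have
  the same nonzero eigenvalues and (BA)^T = A^T B^T.
\<close>

lemma principal_minor_eq_det:
  fixes M :: "real^'n^'n"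
  shows "principal_minor M S = det (\<chi> i j. if i \<in> S \<and> j \<in> S then M$i$j else if i = j then 1 else 0)"
proof -
  let ?X = "(\<chi> i j. if i \<in> S \<and> j \<in> S then M$i$j else if i = j then 1 else 0) :: real^'n^'n"
  have "det ?X = (\<Sum>p\<in>{p. p permutes UNIV}. of_int (sign p) * (\<Prod>i\<in>UNIV. ?X$i$(p i)))"
    by (rule det_def)
  also have "\<dots> = (\<Sum>p\<in>{p. p permutes S}. of_int (sign p) * (\<Prod>i\<in>UNIV. ?X$i$(p i)))"
  proof (rule sum.mono_neutral_right)
    show "finite {p. p permutes (UNIV::'n set)}" by (simp add: finite_permutations)
    show "{p. p permutes S} \<subseteq> {p. p permutes (UNIV::'n set)}" by (auto intro: permutes_subset)
    show "\<forall>p\<in>{p. p permutes UNIV} - {p. p permutes S}. of_int (sign p) * (\<Prod>i\<in>UNIV. ?X$i$(p i)) = 0"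
    proof
      fix p assume "p \<in> {p. p permutes UNIV} - {p. p permutes S}"
      then obtain x where "x \<notin> S" "p x \<noteq> x"
        by (auto simp: permutes_def)
      then have "?X$x$(p x) = 0" by auto
      then have "(\<Prod>i\<in>UNIV. ?X$i$(p i)) = 0"
        by (meson UNIV_I finite prod_zero)
      then show "of_int (sign p) * (\<Prod>i\<in>UNIV. ?X$i$(p i)) = 0" by simp
    qed
  qed
  also have "\<dots> = principal_minor M S"
    unfolding principal_minor_def
  proof (rule sum.cong[OF refl])
    fix p assume "p \<in> {p. p permutes S}"
    then have p: "p permutes S" by simp
    have "(\<Prod>i\<in>UNIV. ?X$i$(p i)) = (\<Prod>i\<in>UNIV - S. ?X$i$(p i)) * (\<Prod>i\<in>S. ?X$i$(p i))"
      by (rule prod.subset_diff[OF subset_UNIV finite])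
    also have "(\<Prod>i\<in>UNIV - S. ?X$i$(p i)) = 1"
      by (rule prod.neutral) (use p in \<open>auto simp: permutes_not_in\<close>)
    also have "(\<Prod>i\<in>S. ?X$i$(p i)) = (\<Prod>i\<in>S. M$i$(p i))"
      by (rule prod.cong[OF refl]) (use p in \<open>auto simp: permutes_in_image\<close>)
    finally show "of_int (sign p) * (\<Prod>i\<in>UNIV. ?X$i$(p i)) = of_int (sign p) * (\<Prod>i\<in>S. M$i$(p i))"
      by simp
  qed
  finally show ?thesis by simp
qed

lemma det_add_mat_pos_if_P0:
  fixes P :: "real^3^3"
  assumes "P0_matrix P" and "t > 0"
  shows "det (P + mat t) > 0"
proof -
  let ?m = "principal_minor P"
  have m: "\<And>S. ?m S \<ge> 0" using assms(1) unfolding P0_matrix_def by blast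
  have "det (P + mat t) = t^3 + t^2 * (?m {1} + ?m {2} + ?m {3})
                         + t * (?m {1,2} + ?m {1,3} + ?m {2,3}) + ?m {1,2,3}"
    unfolding principal_minor_eq_det det_3
    by (simp add: mat_def algebra_simps power2_eq_square power3_eq_cube)
  moreover have "t^2 * (?m {1} + ?m {2} + ?m {3}) \<ge> 0" "t * (?m {1,2} + ?m {1,3} + ?m {2,3}) \<ge> 0"
    using m assms(2) by simp_all
  moreover have "t^3 > 0" using assms(2) by simp
  ultimately show ?thesis using m[of "{1,2,3}"] by linarith
qed

definition of_real_matrix :: "real^'n^'m \<Rightarrow> complex^'n^'m" where
  "of_real_matrix M = (\<chi> i j. complex_of_real (M$i$j))"

lemma of_real_matrix_mult: "of_real_matrix (A ** B) = of_real_matrix A ** of_real_matrix B"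
  by (simp add: of_real_matrix_def vec_eq_iff matrix_matrix_mult_def)

lemma matrix_vector_mul_mat: "mat z *v v = z *s (v :: 'a::comm_ring_1^'n)"
  by (simp add: vec_eq_iff matrix_vector_mult_def mat_def if_distrib if_distribR cong del: if_weak_cong)

lemma eigenvalue_iff_det: "eigenvalue M z \<longleftrightarrow> det (of_real_matrix M - mat z) = 0"
proof -
  have "eigenvalue M z \<longleftrightarrow> \<not> (\<forall>v. (of_real_matrix M - mat z) *v v = 0 \<longrightarrow> v = 0)"
    by (auto simp: eigenvalue_def of_real_matrix_def matrix_vector_mult_diff_rdistrib matrix_vector_mul_mat)
  also have "\<dots> \<longleftrightarrow> \<not> invertible (of_real_matrix M - mat z)"
    by (simp add: invertible_left_inverse matrix_left_invertible_ker)
  finally show ?thesis by (simp add: invertible_det_nz)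
qed

lemma eigenvalue_transpose: "eigenvalue (transpose M) z \<longleftrightarrow> eigenvalue M z"
proof -
  have "of_real_matrix (transpose M) - mat z = transpose (of_real_matrix M - mat z)"
    by (simp add: of_real_matrix_def transpose_def mat_def vec_eq_iff)
  then show ?thesis by (simp add: eigenvalue_iff_det)
qed

lemma eigenvalue_mult_swap:
  fixes A :: "real^'n^'m" and B :: "real^'m^'n"
  assumes "eigenvalue (A ** B) z" and "z \<noteq> 0"
  shows "eigenvalue (B ** A) z"
proof -
  obtain v where v: "v \<noteq> 0" "of_real_matrix A *v (of_real_matrix B *v v) = z *s v"
    using assms(1) by (auto simp: eigenvalue_def of_real_matrix_mult matrix_vector_mul_assoc
                                 of_real_matrix_def[symmetric])
  define w where "w = of_real_matrix B *v v"
  have "w \<noteq> 0"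
  proof
    assume "w = 0"
    then have "z *s v = 0" using v(2) by (simp add: w_def)
    then show False using v(1) assms(2) by simp
  qed
  moreover have "of_real_matrix (B ** A) *v w = z *s w"
    using v(2) by (simp add: w_def of_real_matrix_mult matrix_vector_mul_assoc[symmetric]
                             vector_scalar_commute)
  ultimately show ?thesis
    unfolding eigenvalue_def of_real_matrix_def by blast
qed

lemma add_compound2_nth:
  fixes M :: "real^3^3"
  shows "add_compound2 M $1$1 = M$1$1 + M$2$2" "add_compound2 M $1$2 = M$2$3" "add_compound2 M $1$3 = - M$1$3"
        "add_compound2 M $2$1 = M$3$2" "add_compound2 M $2$2 = M$1$1 + M$3$3" "add_compound2 M $2$3 = M$1$2"
        "add_compound2 M $3$1 = - M$3$1" "add_compound2 M $3$2 = M$2$1" "add_compound2 M $3$3 = M$2$2 + M$3$3"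
  by (simp_all add: add_compound2_def wedge_idx_def)

lemma det_add_compound2_at_nonreal_eigenvalue:
  fixes M :: "real^3^3"
  assumes "eigenvalue M z" and "Im z \<noteq> 0"
  shows "det (add_compound2 M - mat (2 * Re z)) = 0"
proof -
  obtain a b where z: "z = Complex a b" by (cases z)
  \<comment> \<open>with e_k the coefficients of the characteristic polynomial of M - aI,
    Re D = e_3 - e_1 b^2, Im D = b (b^2 - e_2), and det (M^[2] - 2aI) = e_1 e_2 - e_3\<close>
  define D where "D = det (of_real_matrix M - mat z)"
  have "D = 0" using assms(1) by (simp add: D_def eigenvalue_iff_det)
  have "b * det (add_compound2 M - mat (2 * a))
          = - (b * Re D + (M$1$1 + M$2$2 + M$3$3 - 3 * a) * Im D)"
    unfolding D_def z det_3
    by (simp add: add_compound2_nth of_real_matrix_def mat_def algebra_simps)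
  then show ?thesis using \<open>D = 0\<close> assms(2) z by simp
qed

lemma nonreal_eigenvalue_Re_nonneg_if_P0_add_compound2:
  fixes M :: "real^3^3"
  assumes "P0_matrix (add_compound2 M)" and "eigenvalue M z" and "Im z \<noteq> 0"
  shows "Re z \<ge> 0"
proof (rule ccontr)
  assume "\<not> Re z \<ge> 0"
  then have "det (add_compound2 M + mat (- 2 * Re z)) > 0"
    using assms(1) by (intro det_add_mat_pos_if_P0) auto
  moreover have "add_compound2 M + mat (- 2 * Re z) = add_compound2 M - mat (2 * Re z)"
    by (simp add: mat_def vec_eq_iff)
  ultimately show False
    using det_add_compound2_at_nonreal_eigenvalue[OF assms(2,3)] by simp
qed

definition column_dominant :: "real^'n^'n \<Rightarrow> bool" where
  "column_dominant M \<longleftrightarrow> (\<forall>i k. i \<noteq> k \<longrightarrow> \<bar>M$i$k\<bar> \<le> M$k$k)"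

lemma sign_class0_nth:
  assumes "B \<in> sign_class0 M"
  shows "M$i$j * B$i$j \<ge> 0" and "M$i$j = 0 \<Longrightarrow> B$i$j = 0"
proof -
  let ?K = "{C. M$i$j * C$i$j \<ge> 0} \<inter> (if M$i$j = 0 then {C. C$i$j = 0} else UNIV)"
  have "closed ?K"
    by (intro closed_Int) (auto intro!: closed_Collect_le closed_Collect_eq continuous_intros)
  moreover have "sign_class M \<subseteq> ?K"
  proof
    fix C assume "C \<in> sign_class M"
    then have "sgn (C$i$j) = sgn (M$i$j)" unfolding sign_class_def by blast
    then show "C \<in> ?K" by (auto simp: sgn_if zero_le_mult_iff split: if_splits)
  qed
  ultimately have "sign_class0 M \<subseteq> ?K"
    unfolding sign_class0_def by (rule closure_minimal[rotated])
  then show "M$i$j * B$i$j \<ge> 0" and "M$i$j = 0 \<Longrightarrow> B$i$j = 0"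
    using assms by (auto split: if_splits)
qed

lemma column_dominant_mult:
  fixes A :: "real^'m^'n" and B :: "real^'n^'m"
  assumes A: "\<And>i j. A$i$j \<in> {0, 1, -1}"
    and B: "\<And>j k. A$k$j * B$j$k \<ge> 0" "\<And>j k. A$k$j = 0 \<Longrightarrow> B$j$k = 0"
  shows "column_dominant (A ** B)"
  unfolding column_dominant_def
proof (intro allI impI)
  fix i k :: 'n
  have "\<bar>(A ** B)$i$k\<bar> = \<bar>\<Sum>j\<in>UNIV. A$i$j * B$j$k\<bar>"
    by (simp add: matrix_matrix_mult_def)
  also have "\<dots> \<le> (\<Sum>j\<in>UNIV. \<bar>A$i$j * B$j$k\<bar>)"
    by (rule sum_abs)
  also have "\<dots> \<le> (\<Sum>j\<in>UNIV. A$k$j * B$j$k)"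
  proof (rule sum_mono)
    fix j
    show "\<bar>A$i$j * B$j$k\<bar> \<le> A$k$j * B$j$k"
      using A[of i j] A[of k j] B(1)[of k j] B(2)[of k j] by (auto simp: abs_if)
  qed
  also have "\<dots> = (A ** B)$k$k"
    by (simp add: matrix_matrix_mult_def)
  finally show "\<bar>(A ** B)$i$k\<bar> \<le> (A ** B)$k$k" .
qed

lemma mult_le_of_abs_le:
  fixes x y a b :: real
  assumes "\<bar>x\<bar> \<le> a" "\<bar>y\<bar> \<le> b"
  shows "x * y \<le> a * b"
proof -
  have "\<bar>x\<bar> * \<bar>y\<bar> \<le> a * b" using assms by (intro mult_mono) auto
  then show ?thesis by (metis abs_ge_self abs_mult order_trans)
qed

lemma column_dominant_compound_minor_bounds:
  fixes m11 m12 m13 m21 m22 m23 m31 m32 m33 :: real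
  assumes "\<bar>m21\<bar> \<le> m11" "\<bar>m31\<bar> \<le> m11" "\<bar>m12\<bar> \<le> m22" "\<bar>m32\<bar> \<le> m22"
          "\<bar>m13\<bar> \<le> m33" "\<bar>m23\<bar> \<le> m33"
  shows "m23 * m32 \<le> (m11 + m22) * (m11 + m33)"
    and "m13 * m31 \<le> (m11 + m22) * (m22 + m33)"
    and "m12 * m21 \<le> (m11 + m33) * (m22 + m33)"
    and "(m11 + m22) * m12 * m21 + (m11 + m33) * m13 * m31 + (m22 + m33) * m23 * m32
           + m12 * m23 * m31 + m13 * m21 * m32 \<le> (m11 + m22) * (m11 + m33) * (m22 + m33)"
proof -
  have nonneg: "0 \<le> m11" "0 \<le> m22" "0 \<le> m33" using assms by linarith+
  have p12: "m12 * m21 \<le> m22 * m11" and p13: "m13 * m31 \<le> m33 * m11"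
    and p23: "m23 * m32 \<le> m33 * m22"
    using assms by (auto intro: mult_le_of_abs_le)
  have "m12 * m23 * m31 \<le> m22 * m33 * m11" "m13 * m21 * m32 \<le> m33 * m11 * m22"
    using assms by (auto intro!: mult_le_of_abs_le simp: abs_mult)
  moreover have "0 \<le> (m11 + m22) * (m11 * m22 - m12 * m21)" "0 \<le> (m11 + m33) * (m11 * m33 - m13 * m31)"
    "0 \<le> (m22 + m33) * (m22 * m33 - m23 * m32)"
    using nonneg p12 p13 p23 by (intro mult_nonneg_nonneg; simp add: algebra_simps)+
  moreover have "0 \<le> m11 * m22 * m33" using nonneg by simp
  ultimately show "(m11 + m22) * m12 * m21 + (m11 + m33) * m13 * m31 + (m22 + m33) * m23 * m32
           + m12 * m23 * m31 + m13 * m21 * m32 \<le> (m11 + m22) * (m11 + m33) * (m22 + m33)"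
    by (simp add: algebra_simps)
  have "0 \<le> m11 * m11" "0 \<le> m22 * m22" "0 \<le> m33 * m33"
    "0 \<le> m11 * m22" "0 \<le> m11 * m33" "0 \<le> m22 * m33"
    using nonneg by simp_all
  moreover have "(m11 + m22) * (m11 + m33) = m11 * m11 + m11 * m33 + m11 * m22 + m33 * m22"
    "(m11 + m22) * (m22 + m33) = m11 * m22 + m33 * m11 + m22 * m22 + m22 * m33"
    "(m11 + m33) * (m22 + m33) = m22 * m11 + m11 * m33 + m22 * m33 + m33 * m33"
    by (simp_all add: algebra_simps)
  ultimately show "m23 * m32 \<le> (m11 + m22) * (m11 + m33)" "m13 * m31 \<le> (m11 + m22) * (m22 + m33)"
    "m12 * m21 \<le> (m11 + m33) * (m22 + m33)"
    using p12 p13 p23 by linarith+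
qed

lemma P0_add_compound2_if_column_dominant:
  fixes M :: "real^3^3"
  assumes "column_dominant M"
  shows "P0_matrix (add_compound2 M)"
  unfolding P0_matrix_def
proof
  fix S :: "3 set"
  have "\<bar>M$2$1\<bar> \<le> M$1$1" "\<bar>M$3$1\<bar> \<le> M$1$1" "\<bar>M$1$2\<bar> \<le> M$2$2" "\<bar>M$3$2\<bar> \<le> M$2$2"
       "\<bar>M$1$3\<bar> \<le> M$3$3" "\<bar>M$2$3\<bar> \<le> M$3$3"
    using assms by (simp_all add: column_dominant_def)
  note bounds = this column_dominant_compound_minor_bounds[OF this]
  show "principal_minor (add_compound2 M) S \<ge> 0"
    unfolding principal_minor_eq_det det_3
    by (cases "1 \<in> S"; cases "2 \<in> S"; cases "3 \<in> S"; simp add: add_compound2_nth;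
        use bounds in \<open>simp only: algebra_simps; linarith\<close>)
qed

theorem proposition4p1:
  fixes A :: "real^'m^3" and B :: "real^3^'m"
    and A' :: "real^3^'k" and B' :: "real^'k^3"
  shows "((\<forall>i j. A$i$j \<in> {0, 1, -1}) \<and> B \<in> sign_class0 (transpose A) \<longrightarrow>
            P0_matrix (add_compound2 (A ** B)) \<and>
            (\<forall>z. eigenvalue (A ** B) z \<and> Im z \<noteq> 0 \<longrightarrow> \<not> Re z < 0))
       \<and> ((\<forall>i j. A'$i$j \<in> {0, 1, -1}) \<and> B' \<in> sign_class0 (transpose A') \<longrightarrow>
            (\<forall>z. eigenvalue (A' ** B') z \<and> Im z \<noteq> 0 \<longrightarrow> \<not> Re z < 0))"
proof (intro conjI impI allI)
  assume "(\<forall>i j. A$i$j \<in> {0, 1, -1}) \<and> B \<in> sign_class0 (transpose A)"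
  then have "column_dominant (A ** B)"
    using sign_class0_nth[of B "transpose A"] by (intro column_dominant_mult) (auto simp: transpose_def)
  then show P0: "P0_matrix (add_compound2 (A ** B))"
    by (rule P0_add_compound2_if_column_dominant)
  fix z assume "eigenvalue (A ** B) z \<and> Im z \<noteq> 0"
  then show "\<not> Re z < 0"
    using nonreal_eigenvalue_Re_nonneg_if_P0_add_compound2[OF P0] by force
next
  fix z
  assume "(\<forall>i j. A'$i$j \<in> {0, 1, -1}) \<and> B' \<in> sign_class0 (transpose A')"
  then have "column_dominant (transpose A' ** transpose B')"
    using sign_class0_nth[of B' "transpose A'"] by (intro column_dominant_mult) (auto simp: transpose_def)
  moreover assume "eigenvalue (A' ** B') z \<and> Im z \<noteq> 0"
  then have "eigenvalue (transpose A' ** transpose B') z" and "Im z \<noteq> 0"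
    by (auto simp: matrix_transpose_mul[symmetric] eigenvalue_transpose intro: eigenvalue_mult_swap)
  ultimately show "\<not> Re z < 0"
    using nonreal_eigenvalue_Re_nonneg_if_P0_add_compound2 P0_add_compound2_if_column_dominant by force
qed

end
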